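(* For every positive integer $n$: (1) the accessible subset-construction determinization of the underlying automaton of $\mathcal{T}_n$ has exactly $3$ states; (2) the accessible subset-construction determinization of the reversed underlying automaton of $\mathcal{T}_n$ has exactly $2^n+n$ states.
   Context: Let $\Sigma_n=\{a_1,\dots,a_n\}$, output monoid the free monoid $\{1\}^*$. $\mathcal{T}_n=\langle\Sigma_n^*\times\{1\}^*,Q,\{s\},\{f\},\Delta_n\rangle$ with $Q=\{s,q_1,\dots,q_n,f\}$ and $\Delta_n=\Delta_{s,n}\cup\Delta_{Q_n}\cup\Delta_{f,n}$ where: $\Delta_{s,n}=\{\langle s,\langle a_j,1^{i-1}\rangle,q_i\rangle:1\le i,j\le n\}$; $\Delta_{Q_n}$ consists, for all $1\le i,j\le n$, of $\langle q_i,\langle a_j,1^n\rangle,q_i\rangle$ if $i\notin\{1,j\}$, $\langle q_1,\langle a_j,1^{n+j-1}\rangle,q_j\rangle$ if $i=1$, and $\langle q_j,\langle a_j,1^{n-j+1}\rangle,q_1\rangle$ if $i=j\neq1$; $\Delta_{f,n}=\{\langle q_i,\langle a_j,1^{2n-i+1}\rangle,f\rangle:1\le j\le i\le n\}$. The underlying automaton of $\mathcal{T}_n$ is the nondeterministic automaton over $\Sigma_n$ with states $Q$, initial state $s$, final state $f$ and a transition $\langle p,a,q\rangle$ for each $\langle p,\langle a,w\rangle,q\rangle\in\Delta_n$; the reversed underlying automaton has initial state $f$, final state $s$ and all transitions reversed. The accessible subset-construction determinization has as states exactly the subsets reachable from the set of initial states via $\delta(P,a)=\{q:\exists p\in P\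 \langle p,a,q\rangle\}$. *)

theory Defs
  imports Main
begin

text \<open>States of T_n: s, q_i (1 <= i <= n), f. Letters a_j are encoded as j (1 <= j <= n).
Output words in {1}^* are lists over the one-letter alphabet, encoded as nat lists of 1s.\<close>

datatype st = S | Q nat | F

definition alphabet :: "nat \<Rightarrow> nat set" where
  "alphabet n = {1..n}"

definition Delta_s :: "nat \<Rightarrow> (st \<times> (nat \<times> nat list) \<times> st) set" where
  "Delta_s n = {(S, (j, replicate (i - 1) 1), Q i) | i j. 1 \<le> i \<and> i \<le> n \<and> 1 \<le> j \<and> j \<le> n}"

definition Delta_Q :: "nat \<Rightarrow> (st \<times> (nat \<times> nat list) \<times> st) set" where
  "Delta_Q n =
     {(Q i, (j, replicate n 1), Q i) | i j. 1 \<le> i \<and> i \<le> n \<and> 1 \<le> j \<and> j \<le> n \<and> i \<notin> {1, j}}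
   \<union> {(Q 1, (j, replicate (n + j - 1) 1), Q j) | j. 1 \<le> j \<and> j \<le> n}
   \<union> {(Q j, (j, replicate (n - j + 1) 1), Q 1) | j. 1 \<le> j \<and> j \<le> n \<and> j \<noteq> 1}"

definition Delta_f :: "nat \<Rightarrow> (st \<times> (nat \<times> nat list) \<times> st) set" where
  "Delta_f n = {(Q i, (j, replicate (2 * n - i + 1) 1), F) | i j. 1 \<le> j \<and> j \<le> i \<and> i \<le> n}"

definition Delta :: "nat \<Rightarrow> (st \<times> (nat \<times> nat list) \<times> st) set" where
  "Delta n = Delta_s n \<union> Delta_Q n \<union> Delta_f n"

text \<open>Underlying automaton (initial S, final F) and its reversal (initial F, final S).\<close>

definition under_trans :: "nat \<Rightarrow> (st \<times> nat \<times> st) set" where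
  "under_trans n = {(p, a, q) | p a w q. (p, (a, w), q) \<in> Delta n}"

definition rev_trans :: "nat \<Rightarrow> (st \<times> nat \<times> st) set" where
  "rev_trans n = {(q, a, p) | p a q. (p, a, q) \<in> under_trans n}"

definition subset_step :: "('q \<times> 'a \<times> 'q) set \<Rightarrow> 'q set \<Rightarrow> 'a \<Rightarrow> 'q set" where
  "subset_step T P a = {q. \<exists>p\<in>P. (p, a, q) \<in> T}"

inductive_set det_states :: "('q \<times> 'a \<times> 'q) set \<Rightarrow> 'a set \<Rightarrow> 'q set \<Rightarrow> 'q set set"
  for T :: "('q \<times> 'a \<times> 'q) set" and \<Sigma> :: "'a set" and I :: "'q set" where
  init: "I \<in> det_states T \<Sigma> I"
| step: "P \<in> det_states T \<Sigma> I \<Longrightarrow> a \<in> \<Sigma> \<Longrightarrow> subset_step T P a \<in> det_states T \<Sigma> I"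

end

theory Submission
  imports Defs "HOL-Combinatorics.Transposition"
begin

(* Every letter a acts on the states q_1, ..., q_n of T_n by the transposition (1 a), and
   a_j leads from q_i to f exactly when j \<le> i. Forwards, {s} is followed by {q_1,...,q_n}
   and then by {q_1,...,q_n,f} forever. Backwards, a_j leads from {f} to the suffix
   {q_j,...,q_n}; from then on s is always present and the Q-part is moved by the
   transpositions (1 a). These generate the symmetric group on {1..n}, so from the suffix
   of size k every k-subset is reached: this gives {f}, n suffixes and 2^n - 1 sets
   containing s. *)

lemma det_states_subsetI:
  assumes "I \<in> A" and "\<And>P a. P \<in> A \<Longrightarrow> a \<in> \<Sigma> \<Longrightarrow> subset_step T P a \<in> A"
  shows "det_states T \<Sigma> I \<subseteq> A"
proof
  fix P assume "P \<in> det_states T \<Sigma> I"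
  then show "P \<in> A" by induction (use assms in auto)
qed

lemma det_states_step_init: "a \<in> \<Sigma> \<Longrightarrow> subset_step T I a \<in> det_states T \<Sigma> I"
  by (rule det_states.step[OF det_states.init])

lemma subset_step_insert_dead:
  assumes "\<And>a q. (p, a, q) \<notin> T"
  shows "subset_step T (insert p P) a = subset_step T P a"
  using assms by (auto simp: subset_step_def)

lemma transpose_image_exchange:
  assumes "a \<in> X" and "b \<notin> X"
  shows "transpose a b ` X = insert b (X - {a})"
  using assms by (auto simp: in_transpose_image_iff transpose_def split: if_splits)

lemma star_transposition_closed_exchange:
  assumes closed: "\<And>X a. X \<in> R \<Longrightarrow> a \<in> A \<Longrightarrow> transpose c a ` X \<in> R"
    and "X \<in> R" "a \<in> A" "b \<in> A" "a \<in> X" "b \<notin> X"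
  shows "insert b (X - {a}) \<in> R"
proof -
  consider "c = a" | "c = b" | "c \<noteq> a" "c \<noteq> b" by blast
  then have "transpose a b ` X \<in> R"
  proof cases
    case 1
    then show ?thesis using closed[OF \<open>X \<in> R\<close> \<open>b \<in> A\<close>] by simp
  next
    case 2
    then show ?thesis
      using closed[OF \<open>X \<in> R\<close> \<open>a \<in> A\<close>] by (simp add: transpose_commute)
  next
    case 3
    have "a \<noteq> b" using \<open>a \<in> X\<close> \<open>b \<notin> X\<close> by blast
    then have "transpose b c \<circ> transpose c a \<circ> transpose b c = transpose b a"
      using 3 by (simp add: transpose_comp_triple)
    then have "transpose a b = transpose c b \<circ> transpose c a \<circ> transpose c b"
      by (metis transpose_commute)
    moreover have "transpose c b ` transpose c a ` transpose c b ` X \<in> R"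
      by (intro closed) (use assms(2-4) in simp_all)
    ultimately show ?thesis by (simp add: image_comp)
  qed
  then show ?thesis using transpose_image_exchange[OF \<open>a \<in> X\<close> \<open>b \<notin> X\<close>] by simp
qed

lemma star_transposition_closed_card:
  assumes closed: "\<And>X a. X \<in> R \<Longrightarrow> a \<in> A \<Longrightarrow> transpose c a ` X \<in> R"
    and "X \<in> R" "X \<union> Y \<subseteq> A" "finite X" "finite Y" "card X = card Y"
  shows "Y \<in> R"
  using assms(2-6)
proof (induction "card (Y - X)" arbitrary: X rule: less_induct)
  case less
  show ?case
  proof (cases "Y \<subseteq> X")
    case True
    then show ?thesis using less.prems card_subset_eq by metis
  next
    case False
    then obtain b where b: "b \<in> Y" "b \<notin> X" by blast
    have "\<not> X \<subseteq> Y" using less.prems b card_subset_eq by metis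
    then obtain a where a: "a \<in> X" "a \<notin> Y" by blast
    define X' where "X' = insert b (X - {a})"
    have "X' \<in> R"
      unfolding X'_def
      using star_transposition_closed_exchange[OF closed] less.prems a b by blast
    moreover have "card X' = card Y"
    proof -
      have "card X > 0" using less.prems a card_gt_0_iff by blast
      then show ?thesis using less.prems a b by (simp add: X'_def card_Diff_singleton)
    qed
    moreover have "card (Y - X') < card (Y - X)"
    proof -
      have "Y - X' = (Y - X) - {b}" using a by (auto simp: X'_def)
      then show ?thesis using b \<open>finite Y\<close> by (metis DiffI card_Diff1_less finite_Diff)
    qed
    moreover have "X' \<union> Y \<subseteq> A" "finite X'" using less.prems b by (auto simp: X'_def)
    ultimately show ?thesis using less.hyps less.prems by blast
  qed
qed

lemma under_trans_iff:
  "(p, a, q) \<in> under_trans n \<longleftrightarrow> 1 \<le> a \<and> a \<le> n \<and>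
     ((p = S \<and> (\<exists>i. q = Q i \<and> 1 \<le> i \<and> i \<le> n))
    \<or> (\<exists>i. p = Q i \<and> q = Q i \<and> 1 \<le> i \<and> i \<le> n \<and> i \<noteq> 1 \<and> i \<noteq> a)
    \<or> (p = Q 1 \<and> q = Q a)
    \<or> (p = Q a \<and> q = Q 1 \<and> a \<noteq> 1)
    \<or> (\<exists>i. p = Q i \<and> q = F \<and> a \<le> i \<and> i \<le> n))" (is "?L \<longleftrightarrow> ?R")
proof
  assume ?L
  then obtain w where "(p, (a, w), q) \<in> Delta_s n \<union> Delta_Q n \<union> Delta_f n"
    unfolding under_trans_def Delta_def by blast
  then show ?R unfolding Delta_s_def Delta_Q_def Delta_f_def by fastforce
next
  assume ?R
  then show ?L
    unfolding under_trans_def Delta_def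
    by (elim conjE disjE exE) (simp_all add: Delta_s_def Delta_Q_def Delta_f_def)
qed

lemma under_trans_from_S:
  "(S, a, q) \<in> under_trans n \<longleftrightarrow> a \<in> {1..n} \<and> q \<in> Q ` {1..n}"
  by (auto simp: under_trans_iff)

lemma under_trans_from_F: "(F, a, q) \<notin> under_trans n"
  by (simp add: under_trans_iff)

lemma under_trans_from_Q:
  assumes "a \<in> {1..n}" "i \<in> {1..n}"
  shows "(Q i, a, q) \<in> under_trans n \<longleftrightarrow> q = Q (transpose 1 a i) \<or> (q = F \<and> a \<le> i)"
  using assms by (cases q) (auto simp: under_trans_iff transpose_def)

lemma under_trans_to_S: "(p, a, S) \<notin> under_trans n"
  by (simp add: under_trans_iff)

lemma under_trans_to_F:
  "(p, a, F) \<in> under_trans n \<longleftrightarrow> a \<in> {1..n} \<and> p \<in> Q ` {a..n}"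
  by (cases p) (auto simp: under_trans_iff)

lemma under_trans_to_Q:
  assumes "a \<in> {1..n}" "i \<in> {1..n}"
  shows "(p, a, Q i) \<in> under_trans n \<longleftrightarrow> p = S \<or> p = Q (transpose 1 a i)"
  using assms by (cases p) (auto simp: under_trans_iff transpose_def)

lemma rev_trans_iff [simp]: "(p, a, q) \<in> rev_trans n \<longleftrightarrow> (q, a, p) \<in> under_trans n"
  unfolding rev_trans_def by blast

lemma under_step_S:
  "a \<in> alphabet n \<Longrightarrow> subset_step (under_trans n) {S} a = Q ` {1..n}"
  by (simp add: subset_step_def under_trans_from_S alphabet_def)

lemma under_step_Q:
  assumes "a \<in> alphabet n"
  shows "subset_step (under_trans n) (Q ` {1..n}) a = insert F (Q ` {1..n})"
proof -
  have a: "a \<in> {1..n}" using assms by (simp add: alphabet_def)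
  show ?thesis
  proof (rule set_eqI)
    fix q
    have "q \<in> subset_step (under_trans n) (Q ` {1..n}) a
        \<longleftrightarrow> (\<exists>i\<in>{1..n}. q = Q (transpose 1 a i) \<or> (q = F \<and> a \<le> i))"
      using under_trans_from_Q[OF a] by (auto simp: subset_step_def)
    also have "\<dots> \<longleftrightarrow> q \<in> insert F (Q ` transpose 1 a ` {1..n})"
      using a by (auto simp del: transpose_image_eq)
    also have "transpose 1 a ` {1..n} = {1..n}" using a by simp
    finally show "q \<in> subset_step (under_trans n) (Q ` {1..n}) a \<longleftrightarrow> q \<in> insert F (Q ` {1..n})" .
  qed
qed

lemma under_det_states:
  assumes "1 \<le> n"
  shows "det_states (under_trans n) (alphabet n) {S} = {{S}, Q ` {1..n}, insert F (Q ` {1..n})}"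
proof
  show "det_states (under_trans n) (alphabet n) {S} \<subseteq> {{S}, Q ` {1..n}, insert F (Q ` {1..n})}"
  proof (rule det_states_subsetI)
    fix P a
    assume "P \<in> {{S}, Q ` {1..n}, insert F (Q ` {1..n})}" and a: "a \<in> alphabet n"
    then have "subset_step (under_trans n) P a = Q ` {1..n}
        \<or> subset_step (under_trans n) P a = insert F (Q ` {1..n})"
      by (auto simp only: under_step_S[OF a] under_step_Q[OF a]
          subset_step_insert_dead[OF under_trans_from_F])
    then show "subset_step (under_trans n) P a \<in> {{S}, Q ` {1..n}, insert F (Q ` {1..n})}"
      by blast
  qed simp
next
  have one: "1 \<in> alphabet n" using assms by (simp add: alphabet_def)
  have "Q ` {1..n} \<in> det_states (under_trans n) (alphabet n) {S}"
    using det_states_step_init[OF one, where T = "under_trans n" and I = "{S}"]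
    by (simp only: under_step_S[OF one])
  moreover from det_states.step[OF this one]
  have "insert F (Q ` {1..n}) \<in> det_states (under_trans n) (alphabet n) {S}"
    by (simp only: under_step_Q[OF one])
  ultimately show "{{S}, Q ` {1..n}, insert F (Q ` {1..n})} \<subseteq> det_states (under_trans n) (alphabet n) {S}"
    using det_states.init by blast
qed

lemma under_det_states_card:
  assumes "1 \<le> n"
  shows "card (det_states (under_trans n) (alphabet n) {S}) = 3"
proof -
  have "Q 1 \<in> Q ` {1..n}" "S \<notin> Q ` {1..n}" "F \<notin> Q ` {1..n}" using assms by auto
  then have "{S} \<noteq> Q ` {1..n}" "{S} \<noteq> insert F (Q ` {1..n})" "Q ` {1..n} \<noteq> insert F (Q ` {1..n})"
    by auto
  then show ?thesis by (simp add: under_det_states[OF assms])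
qed

lemma rev_step_F:
  "a \<in> alphabet n \<Longrightarrow> subset_step (rev_trans n) {F} a = Q ` {a..n}"
  by (simp add: subset_step_def under_trans_to_F alphabet_def)

lemma rev_step_Q:
  assumes "a \<in> alphabet n" "X \<subseteq> {1..n}" "X \<noteq> {}"
  shows "subset_step (rev_trans n) (Q ` X) a = insert S (Q ` transpose 1 a ` X)"
proof -
  have a: "a \<in> {1..n}" using assms by (simp add: alphabet_def)
  show ?thesis
  proof (rule set_eqI)
    fix p
    have "p \<in> subset_step (rev_trans n) (Q ` X) a \<longleftrightarrow> (\<exists>i\<in>X. (p, a, Q i) \<in> under_trans n)"
      by (auto simp: subset_step_def)
    also have "\<dots> \<longleftrightarrow> (\<exists>i\<in>X. p = S \<or> p = Q (transpose 1 a i))"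
      using under_trans_to_Q[OF a] assms(2) by (metis subsetD)
    also have "\<dots> \<longleftrightarrow> p \<in> insert S (Q ` transpose 1 a ` X)"
      using assms(3) by (auto simp del: transpose_image_eq)
    finally show "p \<in> subset_step (rev_trans n) (Q ` X) a \<longleftrightarrow> p \<in> insert S (Q ` transpose 1 a ` X)" .
  qed
qed

lemma rev_step_insert_S:
  assumes "a \<in> alphabet n" "X \<subseteq> {1..n}" "X \<noteq> {}"
  shows "subset_step (rev_trans n) (insert S (Q ` X)) a = insert S (Q ` transpose 1 a ` X)"
  using rev_step_Q[OF assms] by (simp add: subset_step_insert_dead under_trans_to_S)

lemma transpose_image_nonempty_subset:
  assumes "(a :: nat) \<in> {1..n}" "X \<subseteq> {1..n}" "X \<noteq> {}"
  shows "transpose 1 a ` X \<subseteq> {1..n}" "transpose 1 a ` X \<noteq> {}"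
proof -
  have "transpose 1 a ` {1..n} = {1..n}" using assms(1) by (intro transpose_image_eq) auto
  then show "transpose 1 a ` X \<subseteq> {1..n}" using assms(2) by blast
  show "transpose 1 a ` X \<noteq> {}" using assms(3) by simp
qed

definition rev_reachable_sets :: "nat \<Rightarrow> st set set" where
  "rev_reachable_sets n =
     insert {F} ((\<lambda>j. Q ` {j..n}) ` {1..n} \<union> (\<lambda>X. insert S (Q ` X)) ` (Pow {1..n} - {{}}))"

lemma rev_det_states_subset:
  "det_states (rev_trans n) (alphabet n) {F} \<subseteq> rev_reachable_sets n"
proof (rule det_states_subsetI)
  fix P a
  assume P: "P \<in> rev_reachable_sets n" and a: "a \<in> alphabet n"
  then have a': "a \<in> {1..n}" by (simp add: alphabet_def)
  from P consider "P = {F}" | j where "j \<in> {1..n}" "P = Q ` {j..n}"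
    | X where "X \<subseteq> {1..n}" "X \<noteq> {}" "P = insert S (Q ` X)"
    by (auto simp: rev_reachable_sets_def)
  then show "subset_step (rev_trans n) P a \<in> rev_reachable_sets n"
  proof cases
    case 1
    then show ?thesis using a' by (simp add: rev_step_F[OF a] rev_reachable_sets_def)
  next
    case (2 j)
    then have "{j..n} \<subseteq> {1..n}" "{j..n} \<noteq> {}" by auto
    then show ?thesis
      using transpose_image_nonempty_subset[OF a'] 2 by (auto simp: rev_step_Q[OF a] rev_reachable_sets_def)
  next
    case (3 X)
    then show ?thesis
      using transpose_image_nonempty_subset[OF a' 3(1,2)] by (auto simp: rev_step_insert_S[OF a] rev_reachable_sets_def)
  qed
qed (simp add: rev_reachable_sets_def)

lemma rev_det_states_insert_S:
  assumes "X \<subseteq> {1..n}" "X \<noteq> {}"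
  shows "insert S (Q ` X) \<in> det_states (rev_trans n) (alphabet n) {F}"
proof -
  define R where "R = {X. X \<subseteq> {1..n} \<and> X \<noteq> {} \<and> insert S (Q ` X) \<in> det_states (rev_trans n) (alphabet n) {F}}"
  have closed: "transpose 1 a ` Y \<in> R" if "Y \<in> R" "a \<in> {1..n}" for Y a
  proof -
    have a: "a \<in> alphabet n" using that(2) by (simp add: alphabet_def)
    have Y: "Y \<subseteq> {1..n}" "Y \<noteq> {}"
      and "insert S (Q ` Y) \<in> det_states (rev_trans n) (alphabet n) {F}"
      using that(1) by (auto simp: R_def)
    from det_states.step[OF this(3) a]
    have "insert S (Q ` transpose 1 a ` Y) \<in> det_states (rev_trans n) (alphabet n) {F}"
      by (simp add: rev_step_insert_S[OF a Y])
    then show ?thesis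
      using transpose_image_nonempty_subset[OF that(2) Y] by (simp add: R_def)
  qed
  define j where "j = n + 1 - card X"
  have fin: "finite X" using assms(1) finite_subset by blast
  have card: "1 \<le> card X" "card X \<le> n"
    using assms fin card_mono[OF _ assms(1)] by (auto simp: Suc_le_eq card_gt_0_iff)
  have j: "j \<in> alphabet n" "1 \<in> alphabet n" using card by (auto simp: j_def alphabet_def)
  have suffix: "{j..n} \<subseteq> {1..n}" "{j..n} \<noteq> {}" using card by (auto simp: j_def)
  have "Q ` {j..n} \<in> det_states (rev_trans n) (alphabet n) {F}"
    using det_states_step_init[OF j(1), where T = "rev_trans n" and I = "{F}"]
    by (simp only: rev_step_F[OF j(1)])
  from det_states.step[OF this j(2)] have suffix_R: "{j..n} \<in> R"
    using suffix by (simp only: R_def rev_step_Q[OF j(2) suffix]) simp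
  have card_eq: "card {j..n} = card X" using card by (simp add: j_def)
  have "{j..n} \<union> X \<subseteq> {1..n}" using suffix(1) assms(1) by blast
  from star_transposition_closed_card[OF closed suffix_R this finite_atLeastAtMost fin card_eq]
  have "X \<in> R" .
  then show ?thesis by (simp add: R_def)
qed

lemma rev_det_states: "det_states (rev_trans n) (alphabet n) {F} = rev_reachable_sets n"
  unfolding rev_reachable_sets_def
proof (rule antisym[OF rev_det_states_subset[unfolded rev_reachable_sets_def]],
    intro insert_subsetI Un_least subsetI)
  show "{F} \<in> det_states (rev_trans n) (alphabet n) {F}" by (rule det_states.init)
next
  fix P assume "P \<in> (\<lambda>j. Q ` {j..n}) ` {1..n}"
  then obtain j where j: "j \<in> alphabet n" and "P = Q ` {j..n}" by (auto simp: alphabet_def)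
  then show "P \<in> det_states (rev_trans n) (alphabet n) {F}"
    using det_states_step_init[OF j, where T = "rev_trans n" and I = "{F}"]
    by (simp only: rev_step_F[OF j])
next
  fix P assume "P \<in> (\<lambda>X. insert S (Q ` X)) ` (Pow {1..n} - {{}})"
  then show "P \<in> det_states (rev_trans n) (alphabet n) {F}"
    using rev_det_states_insert_S by auto
qed

lemma rev_det_states_card:
  "card (det_states (rev_trans n) (alphabet n) {F}) = 2 ^ n + n"
proof -
  let ?U = "(\<lambda>j. Q ` {j..n}) ` {1..n}" and ?V = "(\<lambda>X. insert S (Q ` X)) ` (Pow {1..n} - {{}})"
  have inj_Q: "inj Q" by (rule injI) simp
  have "inj_on (\<lambda>j. Q ` {j..n}) {1..n}"
    by (rule inj_onI) (auto simp: inj_image_eq_iff[OF inj_Q] Icc_eq_Icc)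
  then have card_U: "card ?U = n" by (simp add: card_image)
  have "inj_on (\<lambda>X. insert S (Q ` X)) (Pow {1..n} - {{}})"
  proof (rule inj_onI)
    fix X Y assume "insert S (Q ` X) = insert S (Q ` Y)"
    then have "Q ` X = Q ` Y" by (metis Diff_insert_absorb imageE st.distinct(1))
    then show "X = Y" by (simp add: inj_image_eq_iff[OF inj_Q])
  qed
  then have card_V: "card ?V = 2 ^ n - 1" by (simp add: card_image card_Pow)
  have "{F} \<notin> ?U \<union> ?V" "?U \<inter> ?V = {}" by auto
  then have "card (insert {F} (?U \<union> ?V)) = 1 + n + (2 ^ n - 1)"
    using card_U card_V by (simp add: card_Un_disjoint)
  also have "\<dots> = 2 ^ n + n" using one_le_power[of "2::nat" n] by simp
  finally show ?thesis by (simp add: rev_det_states rev_reachable_sets_def)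
qed

theorem lemma11:
  fixes n :: nat
  assumes "1 \<le> n"
  shows "card (det_states (under_trans n) (alphabet n) {S}) = 3
       \<and> card (det_states (rev_trans n) (alphabet n) {F}) = 2 ^ n + n"
  using under_det_states_card[OF assms] rev_det_states_card by simp

end
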